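(* Let $A$ be a finite alphabet and let $\mu$ be an invariant sofic probability measure on a shift space over $A$. Let $n$ be the dimension of the minimal (reduced) linear representation of $\mu$, and set $K=2^{n^2-1}$. If $\mu$ is not a $K$-step Markov measure, then $\mu$ is not a $k$-step Markov measure for any integer $k\geqslant 1$.
   Context: Shift spaces: $A^{\mathbb{Z}}$ with the product topology and shift $S$, $(Sx)_i=x_{i+1}$; a shift space is a closed $S$-invariant subset $X\subseteq A^{\mathbb Z}$, $\mathcal L(X)$ its set of finite factors and $\mathcal L_k(X)$ those of length $k$. A shift of finite type is a shift space consisting of all sequences avoiding a finite set of words. A factor map is a surjective sliding block code $\phi\colon X\to Y$, $\phi(x)_i=f(x_{i-m}\cdots x_{i+n})$. For a probability measure $\mu$ on $X$, $\hat\mu(w)=\mu(\{x: x_0\cdots x_{|w|-1}=w\})$ for $w\in A^*$. A $1$-step Markov measure is defined by an irreducible stochastic $A\times A$ matrix $M$ and a stochastic row vector $v$ with $vM=v$, via $\hat\mu(a_1\cdots a_m)=v_{a_1}M_{a_1,a_2}\cdots M_{a_{m-1},a_m}$; it is viewed as a measure on any shift containing $X_M=\{x: M_{x_i,x_{i+1}}>0\ \forall i\}$. A probability measure $\nu$ on a shift space $Y$ is sofic if $\nu=\phi\mu$ (i.e. $\nu(U)=\mu(\phi^{-1}U)$) for a factor map $\phi\colon X\to Y$ from a shift of finite type $X$ and a $1$-step Markov measure $\mu$ on $X$. The $k$-th higher block code $\gamma_k$ maps $x$ to the sequence $y$ with $y_i=f(x_{i-k+1}\cdots x_i)$, where $f$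 is a bijection from $\mathcal L_k(X)$ onto a new alphabet $A_k$; a measure $\mu$ on $X$ is $k$-step Markov if its image under $\gamma_k$ is a $1$-step Markov measure. A linear representation of dimension $n$ of $\mu$ is a triple $(\lambda,\varphi,\gamma)$ with $\lambda\in\mathbb R^{1\times n}$, $\gamma\in\mathbb R^{n\times 1}$ and $\varphi$ a monoid morphism from $A^*$ to real $n\times n$ matrices such that $\hat\mu(w)=\lambda\varphi(w)\gamma$ for all $w\in A^*$. It is reduced if the vectors $\lambda\varphi(w)$, $w\in A^*$, span $\mathbb R^{1\times n}$ and the vectors $\varphi(w)\gamma$, $w\in A^*$, span $\mathbb R^{n}$; the reduced (minimal) representation is unique up to linear isomorphism, and its dimension is the smallest possible. *)

theory Defs
  imports "HOL-Probability.Probability" "Jordan_Normal_Form.Matrix"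
begin

definition seqM :: "(int \<Rightarrow> 'b) measure" where
  "seqM = PiM (UNIV :: int set) (\<lambda>_. count_space (UNIV :: 'b set))"

definition shift :: "(int \<Rightarrow> 'b) \<Rightarrow> (int \<Rightarrow> 'b)" where
  "shift x = (\<lambda>i. x (i + 1))"

definition window :: "(int \<Rightarrow> 'b) \<Rightarrow> int \<Rightarrow> nat \<Rightarrow> 'b list" where
  "window x i l = map (\<lambda>j. x (i + int j)) [0..<l]"

definition cyl :: "'b list \<Rightarrow> (int \<Rightarrow> 'b) set" where
  "cyl w = {x. \<forall>i<length w. x (int i) = w ! i}"

definition hat :: "(int \<Rightarrow> 'b) measure \<Rightarrow> 'b list \<Rightarrow> real" where
  "hat \<mu> w = measure \<mu> (cyl w)"

definition shift_space :: "'b set \<Rightarrow> (int \<Rightarrow> 'b) set \<Rightarrow> bool" where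
  "shift_space B X \<longleftrightarrow> finite B \<and> X \<subseteq> {x. \<forall>i. x i \<in> B} \<and>
     closedin (product_topology (\<lambda>_. discrete_topology B) UNIV) X \<and> shift ` X = X"

definition sft :: "'b set \<Rightarrow> (int \<Rightarrow> 'b) set \<Rightarrow> bool" where
  "sft B X \<longleftrightarrow> finite B \<and> (\<exists>F :: 'b list set. finite F \<and>
     X = {x. (\<forall>i. x i \<in> B) \<and> (\<forall>i. \<forall>w\<in>F. window x i (length w) \<noteq> w)})"

definition block_code :: "nat \<Rightarrow> nat \<Rightarrow> ('b list \<Rightarrow> 'c) \<Rightarrow> (int \<Rightarrow> 'b) \<Rightarrow> (int \<Rightarrow> 'c)" where
  "block_code m n f x = (\<lambda>i. f (window x (i - int m) (m + n + 1)))"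

definition markov_data :: "'b set \<Rightarrow> ('b \<Rightarrow> 'b \<Rightarrow> real) \<Rightarrow> ('b \<Rightarrow> real) \<Rightarrow> bool" where
  "markov_data C P v \<longleftrightarrow> finite C \<and> C \<noteq> {} \<and>
     (\<forall>a\<in>C. \<forall>b\<in>C. P a b \<ge> 0) \<and> (\<forall>a\<in>C. (\<Sum>b\<in>C. P a b) = 1) \<and>
     (\<forall>a\<in>C. \<forall>b\<in>C. (a, b) \<in> {(a, b). a \<in> C \<and> b \<in> C \<and> P a b > 0}\<^sup>+) \<and>
     (\<forall>a\<in>C. v a \<ge> 0) \<and> (\<Sum>a\<in>C. v a) = 1 \<and>
     (\<forall>b\<in>C. (\<Sum>a\<in>C. v a * P a b) = v b)"

definition markov_support :: "'b set \<Rightarrow> ('b \<Rightarrow> 'b \<Rightarrow> real) \<Rightarrow> (int \<Rightarrow> 'b) set" where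
  "markov_support C P = {x. \<forall>i. x i \<in> C \<and> P (x i) (x (i + 1)) > 0}"

definition is_markov_measure ::
  "'b set \<Rightarrow> ('b \<Rightarrow> 'b \<Rightarrow> real) \<Rightarrow> ('b \<Rightarrow> real) \<Rightarrow> (int \<Rightarrow> 'b) measure \<Rightarrow> bool" where
  "is_markov_measure C P v \<mu> \<longleftrightarrow> markov_data C P v \<and> prob_space \<mu> \<and> sets \<mu> = sets seqM \<and>
     (\<forall>w. w \<noteq> [] \<longrightarrow> hat \<mu> w =
        (if set w \<subseteq> C then v (hd w) * (\<Prod>i<length w - 1. P (w ! i) (w ! Suc i)) else 0))"

definition markov1 :: "(int \<Rightarrow> 'b) measure \<Rightarrow> bool" where
  "markov1 \<mu> \<longleftrightarrow> (\<exists>C P v. is_markov_measure C P v \<mu>)"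

definition higher_block :: "nat \<Rightarrow> (int \<Rightarrow> 'b) \<Rightarrow> (int \<Rightarrow> 'b list)" where
  "higher_block k x = (\<lambda>i. window x (i - int k + 1) k)"

definition k_step_markov :: "nat \<Rightarrow> (int \<Rightarrow> 'b) measure \<Rightarrow> bool" where
  "k_step_markov k \<mu> \<longleftrightarrow> markov1 (distr \<mu> seqM (higher_block k))"

definition shift_invariant :: "(int \<Rightarrow> 'b) measure \<Rightarrow> bool" where
  "shift_invariant \<mu> \<longleftrightarrow> (\<forall>U\<in>sets seqM. emeasure \<mu> (shift -` U) = emeasure \<mu> U)"

(* nu = phi mu for a factor map phi : X \<rightarrow> Y from an SFT X (alphabet a finite set of
   naturals) and a 1-step Markov measure mu on X *)
definition sofic_on :: "(int \<Rightarrow> 'a) measure \<Rightarrow> (int \<Rightarrow> 'a) set \<Rightarrow> bool" where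
  "sofic_on \<nu> Y \<longleftrightarrow> (\<exists>(B :: nat set) X \<mu> C P v m n f.
     sft B X \<and> is_markov_measure C P v \<mu> \<and> markov_support C P \<subseteq> X \<and>
     block_code m n f ` X = Y \<and> sets \<nu> = sets seqM \<and>
     (\<forall>U\<in>sets seqM. emeasure \<nu> U = emeasure \<mu> (block_code m n f -` U)))"

definition sofic_measure :: "(int \<Rightarrow> 'a) measure \<Rightarrow> bool" where
  "sofic_measure \<nu> \<longleftrightarrow> (\<exists>Y. shift_space UNIV Y \<and> sofic_on \<nu> Y)"

definition lin_rep :: "('a list \<Rightarrow> real) \<Rightarrow> nat \<Rightarrow> real vec \<Rightarrow> ('a list \<Rightarrow> real mat) \<Rightarrow> real vec \<Rightarrow> bool" where
  "lin_rep p n lam Phi gam \<longleftrightarrow> lam \<in> carrier_vec n \<and> gam \<in> carrier_vec n \<and>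
     (\<forall>w. Phi w \<in> carrier_mat n n) \<and> Phi [] = 1\<^sub>m n \<and>
     (\<forall>u w. Phi (u @ w) = Phi u * Phi w) \<and>
     (\<forall>w. p w = lam \<bullet> (Phi w *\<^sub>v gam))"

definition min_rep_dim :: "('a list \<Rightarrow> real) \<Rightarrow> nat" where
  "min_rep_dim p = (LEAST n. \<exists>lam Phi gam. lin_rep p n lam Phi gam)"

end

theory Submission
  imports Defs "HOL-Library.Function_Algebras"
begin

text \<open>Write \<open>p w\<close> for the measure of the cylinder of the word \<open>w\<close>. If \<open>\<nu>\<close> is \<open>k\<close>-step
  Markov, then \<open>p\<close> satisfies the Markov identity \<open>p (u w a) p w = p (u w) p (w a)\<close> for
  \<open>|w| = k\<close>, hence the exchange identity \<open>p (u\<^sub>1 w s\<^sub>1) p (u\<^sub>2 w s\<^sub>2) = p (u\<^sub>1 w s\<^sub>2) p (u\<^sub>2 w s\<^sub>1)\<close>, and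
  \<open>p\<close> has a linear representation. Regard the exchange defects of order \<open>j\<close>, i.e. the
  differences of the two sides as functions of \<open>(s\<^sub>1, s\<^sub>2)\<close> for \<open>|w| = j\<close>, as vectors.
  Their spans \<open>V\<^sub>j\<close> decrease, and \<open>V\<^sub>j\<^sub>+\<^sub>1\<close> is obtained from \<open>V\<^sub>j\<close> by prepending a common letter to
  both arguments, so the chain is constant from its first non-strict step on. A linear
  representation of dimension \<open>n\<close> puts \<open>V\<^sub>0\<close> into a space of dimension at most \<open>n\<^sup>2\<close>; therefore
  \<open>V\<^sub>N = V\<^sub>k = 0\<close> for all \<open>N \<ge> n\<^sup>2\<close>, which is the Markov identity of order \<open>N\<close>. Together with the
  irreducibility inherited from the \<open>k\<close>-step Markov chain, the Markov identity of order \<open>K\<close>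
  gives an explicit irreducible Markov chain on the positive words of length \<open>K\<close> whose measure
  is the image of \<open>\<nu>\<close> under the \<open>K\<close>-th higher block code.\<close>

section \<open>Cylinders and shift-invariant measures\<close>

lemma space_seqM [simp]: "space seqM = UNIV"
  by (simp add: seqM_def space_PiM)

lemma measurable_coordinate: "(\<lambda>x. x j) \<in> seqM \<rightarrow>\<^sub>M count_space UNIV"
  unfolding seqM_def by (rule measurable_component_singleton) simp

lemma sets_seqM_coordinates:
  assumes "finite I"
  shows "{x. \<forall>i\<in>I. x (f i) = g i} \<in> sets seqM"
  using assms
proof (induction I rule: finite_induct)
  case empty
  then show ?case using sets.top[of seqM] by simp
next
  case (insert a I)
  have "{x. x (f a) = g a} \<in> sets seqM"
    using measurable_sets[OF measurable_coordinate, of "{g a}"] by (simp add: vimage_def)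
  moreover have "{x. \<forall>i\<in>insert a I. x (f i) = g i} = {x. x (f a) = g a} \<inter> {x. \<forall>i\<in>I. x (f i) = g i}"
    by auto
  ultimately show ?case using insert by auto
qed

definition cyl_at :: "int \<Rightarrow> 'b list \<Rightarrow> (int \<Rightarrow> 'b) set" where
  "cyl_at c w = {x. \<forall>i<length w. x (int i + c) = w ! i}"

lemma cyl_at_0: "cyl_at 0 w = cyl w"
  by (simp add: cyl_at_def cyl_def)

lemma sets_cyl_at: "cyl_at c w \<in> sets seqM"
proof -
  have "cyl_at c w = {x. \<forall>i\<in>{..<length w}. x (int i + c) = w ! i}"
    by (auto simp: cyl_at_def)
  then show ?thesis by (simp add: sets_seqM_coordinates)
qed

lemma sets_cyl: "cyl w \<in> sets seqM"
  using sets_cyl_at[of 0 w] by (simp add: cyl_at_0)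

lemma all_less_add: "(\<forall>i<(m::nat) + n. P i) \<longleftrightarrow> (\<forall>i<m. P i) \<and> (\<forall>i<n. P (m + i))"
proof safe
  fix i assume P: "\<forall>i<m. P i" "\<forall>i<n. P (m + i)" and i: "i < m + n"
  show "P i"
  proof (cases "i < m")
    case False
    then have "i - m < n" using i by simp
    then have "P (m + (i - m))" using P(2) by blast
    then show ?thesis using False by simp
  qed (use P(1) in simp)
qed simp_all

lemma cyl_at_append: "cyl_at c (u @ w) = cyl_at c u \<inter> cyl_at (c + int (length u)) w"
  by (auto simp: cyl_at_def all_less_add nth_append ac_simps)

lemma cyl_at_singleton: "cyl_at c [a] = {x. x c = a}"
  by (simp add: cyl_at_def)

lemma measurable_shift: "shift \<in> seqM \<rightarrow>\<^sub>M seqM"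
  unfolding seqM_def shift_def
  by (rule measurable_PiM_single') (auto intro!: measurable_component_singleton simp: space_PiM)

lemma funpow_shift: "(shift ^^ j) x = (\<lambda>i. x (i + int j))"
  by (induction j arbitrary: x) (auto simp: shift_def ac_simps)

lemma measurable_funpow_shift: "shift ^^ j \<in> seqM \<rightarrow>\<^sub>M seqM"
  by (induction j) (auto intro: measurable_compose[OF _ measurable_shift])

lemma vimage_funpow_shift_cyl_at: "(shift ^^ j) -` cyl_at c w = cyl_at (c + int j) w"
  by (auto simp: funpow_shift cyl_at_def ac_simps)

locale shift_invariant_prob =
  fixes \<nu> :: "(int \<Rightarrow> 'a::finite) measure"
  assumes prob_space: "prob_space \<nu>" and sets_eq: "sets \<nu> = sets seqM"
    and invariant: "shift_invariant \<nu>"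
begin

abbreviation p :: "'a list \<Rightarrow> real" where
  "p \<equiv> hat \<nu>"

lemma space_eq [simp]: "space \<nu> = UNIV"
  using sets_eq_imp_space_eq[OF sets_eq] by simp

lemma finite_measure: "finite_measure \<nu>"
  using prob_space prob_space_def by blast

lemma measure_vimage_funpow_shift:
  "U \<in> sets seqM \<Longrightarrow> measure \<nu> ((shift ^^ j) -` U) = measure \<nu> U"
proof (induction j arbitrary: U)
  case (Suc j)
  have "(shift ^^ j) -` U \<in> sets seqM"
    using measurable_sets[OF measurable_funpow_shift Suc.prems] by simp
  then have "measure \<nu> (shift -` ((shift ^^ j) -` U)) = measure \<nu> ((shift ^^ j) -` U)"
    using invariant by (simp add: shift_invariant_def measure_def)
  then show ?case
    using Suc by (simp only: funpow_Suc_right vimage_comp)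
qed simp

lemma measure_cyl_at: "measure \<nu> (cyl_at c w) = p w"
proof (cases "c \<ge> 0")
  case True
  then have "cyl_at c w = (shift ^^ nat c) -` cyl_at 0 w"
    by (simp add: vimage_funpow_shift_cyl_at)
  then show ?thesis
    by (simp add: measure_vimage_funpow_shift sets_cyl cyl_at_0 hat_def)
next
  case False
  then have "(shift ^^ nat (- c)) -` cyl_at c w = cyl_at 0 w"
    by (simp add: vimage_funpow_shift_cyl_at)
  then show ?thesis
    using measure_vimage_funpow_shift[OF sets_cyl_at, of "nat (- c)" c w]
    by (simp add: cyl_at_0 hat_def)
qed

lemma hat_nonneg: "p w \<ge> 0"
  by (simp add: hat_def)

lemma hat_Nil: "p [] = 1"
  using prob_space.prob_space[OF prob_space] by (simp add: hat_def cyl_def)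

lemma measure_cyl_at_mono: "A \<subseteq> cyl_at c w \<Longrightarrow> measure \<nu> A \<le> p w"
  using finite_measure.finite_measure_mono[OF finite_measure, of A "cyl_at c w"]
  by (simp add: measure_cyl_at sets_eq sets_cyl_at)

lemma hat_prefix_le: "p (u @ w) \<le> p u"
proof -
  have "cyl_at 0 (u @ w) \<subseteq> cyl_at 0 u" by (simp add: cyl_at_append)
  from measure_cyl_at_mono[OF this] show ?thesis by (simp add: measure_cyl_at)
qed

lemma hat_suffix_le: "p (u @ w) \<le> p w"
proof -
  have "cyl_at 0 (u @ w) \<subseteq> cyl_at (int (length u)) w" by (simp add: cyl_at_append)
  from measure_cyl_at_mono[OF this] show ?thesis by (simp add: measure_cyl_at)
qed

lemma hat_infix_le: "p (u @ w @ s) \<le> p w"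
  using hat_suffix_le[of u "w @ s"] hat_prefix_le[of w s] by linarith

lemma hat_infix_eq_0: "p w = 0 \<Longrightarrow> p (u @ w @ s) = 0"
  using hat_infix_le[of u w s] hat_nonneg[of "u @ w @ s"] by simp

lemma measure_sum_coordinate:
  assumes "S \<in> sets seqM"
  shows "measure \<nu> S = (\<Sum>a\<in>UNIV. measure \<nu> (S \<inter> {x. x j = a}))"
proof -
  have "{x. x j = a} \<in> sets seqM" for a
    using measurable_sets[OF measurable_coordinate, of "{a}"] by (simp add: vimage_def)
  then have "measure \<nu> (\<Union>a. S \<inter> {x. x j = a}) = (\<Sum>a\<in>UNIV. measure \<nu> (S \<inter> {x. x j = a}))"
    using assms sets_eq
    by (intro finite_measure.finite_measure_finite_Union[OF finite_measure])
      (auto simp: disjoint_family_on_def intro!: sets.Int)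
  moreover have "(\<Union>a. S \<inter> {x. x j = a}) = S" by auto
  ultimately show ?thesis by simp
qed

lemma hat_eq_sum_snoc: "p w = (\<Sum>a\<in>UNIV. p (w @ [a]))"
proof -
  have "cyl_at 0 w \<inter> {x. x (int (length w)) = a} = cyl_at 0 (w @ [a])" for a
    by (simp add: cyl_at_append cyl_at_singleton)
  then show ?thesis
    using measure_sum_coordinate[OF sets_cyl_at, of 0 w "int (length w)"]
    by (simp add: measure_cyl_at)
qed

lemma hat_eq_sum_Cons: "p w = (\<Sum>a\<in>UNIV. p (a # w))"
proof -
  have "cyl_at 1 w \<inter> {x. x 0 = a} = cyl_at 0 ([a] @ w)" for a
    unfolding cyl_at_append by (auto simp: cyl_at_singleton)
  then have "p w = (\<Sum>a\<in>UNIV. p ([a] @ w))"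
    using measure_sum_coordinate[OF sets_cyl_at, of 1 w 0]
    by (simp add: measure_cyl_at del: append_Cons append_Nil)
  then show ?thesis by simp
qed

lemma hat_sum_prefixes: "(\<Sum>u | length u = n. p (u @ w)) = p w"
proof (induction n)
  case 0
  then show ?case by simp
next
  case (Suc n)
  have eq: "{u. length u = Suc n} = (\<lambda>(u, a). a # u) ` ({u. length u = n} \<times> UNIV)"
    by (auto simp: length_Suc_conv image_iff)
  have inj: "inj_on (\<lambda>(u, a). a # u) ({u. length u = n} \<times> (UNIV :: 'a set))"
    by (auto simp: inj_on_def)
  have "(\<Sum>u | length u = Suc n. p (u @ w)) = (\<Sum>(u, a)\<in>{u. length u = n} \<times> UNIV. p (a # u @ w))"
    unfolding eq by (subst sum.reindex[OF inj]) (simp add: case_prod_unfold)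
  also have "\<dots> = (\<Sum>u | length u = n. \<Sum>a\<in>UNIV. p (a # u @ w))"
    by (simp add: sum.cartesian_product)
  also have "\<dots> = p w"
    using Suc by (simp flip: hat_eq_sum_Cons)
  finally show ?case .
qed

lemma hat_pos_extend_right: "p x > 0 \<Longrightarrow> \<exists>t. length t = m \<and> p (x @ t) > 0"
proof (induction m)
  case (Suc m)
  then obtain t where t: "length t = m" "p (x @ t) > 0" by blast
  then obtain a where "p ((x @ t) @ [a]) > 0"
    using hat_eq_sum_snoc[of "x @ t"] sum_nonpos[of UNIV "\<lambda>a. p ((x @ t) @ [a])"]
    by (metis not_le)
  then show ?case using t by (intro exI[of _ "t @ [a]"]) simp
qed simp

lemma hat_pos_extend_left: "p y > 0 \<Longrightarrow> \<exists>t. length t = m \<and> p (t @ y) > 0"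
proof (induction m)
  case (Suc m)
  then obtain t where t: "length t = m" "p (t @ y) > 0" by blast
  then obtain a where "p (a # t @ y) > 0"
    using hat_eq_sum_Cons[of "t @ y"] sum_nonpos[of UNIV "\<lambda>a. p (a # t @ y)"]
    by (metis not_le)
  then show ?case using t by (intro exI[of _ "a # t"]) simp
qed simp

end

section \<open>Higher block words\<close>

text \<open>The word that the \<open>k\<close>-th higher block code reads off from \<open>z\<close>.\<close>

definition blocks :: "nat \<Rightarrow> 'b list \<Rightarrow> 'b list list" where
  "blocks k z = map (\<lambda>i. take k (drop i z)) [0..<Suc (length z) - k]"

lemma length_blocks [simp]: "length (blocks k z) = Suc (length z) - k"
  by (simp add: blocks_def)

lemma nth_blocks: "i < Suc (length z) - k \<Longrightarrow> blocks k z ! i = take k (drop i z)"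
  by (simp add: blocks_def)

lemma blocks_self: "length w = k \<Longrightarrow> blocks k w = [w]"
  by (simp add: blocks_def)

lemma last_blocks: "k \<le> length z \<Longrightarrow> last (blocks k z) = drop (length z - k) z"
  by (simp add: last_conv_nth nth_blocks Suc_diff_le blocks_def)

lemma blocks_snoc:
  assumes "k \<ge> 1" "k \<le> length z"
  shows "blocks k (z @ [a]) = blocks k z @ [drop (Suc (length z) - k) (z @ [a])]"
proof -
  have "Suc (length (z @ [a])) - k = Suc (Suc (length z) - k)" using assms by simp
  then have "blocks k (z @ [a]) = map (\<lambda>i. take k (drop i (z @ [a]))) [0..<Suc (length z) - k]
      @ [take k (drop (Suc (length z) - k) (z @ [a]))]"
    unfolding blocks_def by simp
  also have "map (\<lambda>i. take k (drop i (z @ [a]))) [0..<Suc (length z) - k] = blocks k z"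
    unfolding blocks_def using assms by (intro map_cong) auto
  finally show ?thesis using assms by simp
qed

lemma nth_blocks_split:
  assumes "i < length (blocks k z)"
  shows "length (blocks k z ! i) = k" "z = take i z @ blocks k z ! i @ drop (i + k) z"
proof -
  have "blocks k z ! i = take k (drop i z)" using assms by (simp add: nth_blocks)
  moreover have "take i z @ take k (drop i z) @ drop (i + k) z = z"
    by (metis add.commute append_take_drop_id drop_drop)
  ultimately show "length (blocks k z ! i) = k" "z = take i z @ blocks k z ! i @ drop (i + k) z"
    using assms by auto
qed

lemma nth_blocks_Suc:
  assumes "k \<ge> 1" "Suc i < length (blocks k z)"
  shows "blocks k z ! Suc i \<noteq> []" "butlast (blocks k z ! Suc i) = tl (blocks k z ! i)"
    "blocks k z ! i @ [last (blocks k z ! Suc i)] = take (Suc k) (drop i z)"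
proof -
  obtain k' where k': "k = Suc k'" using assms(1) by (cases k) auto
  have "Suc (Suc k') \<le> length (drop i z)" using assms(2) k' by simp
  then obtain x z' where z': "drop i z = x # z'" "Suc k' \<le> length z'"
    by (cases "drop i z") auto
  have "drop (Suc i) z = z'" using z'(1) by (metis drop_Suc list.sel(3) tl_drop)
  then have "blocks k z ! Suc i = take k z'" using assms(2) by (simp add: nth_blocks)
  moreover have "blocks k z ! i = x # take k' z'" using assms(2) z'(1) k' by (simp add: nth_blocks)
  moreover have "take k z' = take k' z' @ [z' ! k']" using z'(2) k' by (simp add: take_Suc_conv_app_nth)
  ultimately show "blocks k z ! Suc i \<noteq> []" "butlast (blocks k z ! Suc i) = tl (blocks k z ! i)"
    "blocks k z ! i @ [last (blocks k z ! Suc i)] = take (Suc k) (drop i z)"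
    using z' k' by auto
qed

lemma blocks_snoc_cases:
  assumes "k \<ge> 1" "W \<noteq> []" "W @ [b] = blocks k z'"
  obtains z where "k \<le> length z" "W = blocks k z" "z' = z @ [last z']"
    "b = drop (Suc (length z) - k) z'"
proof -
  have "length (W @ [b]) = length (blocks k z')" using assms(3) by simp
  then have "Suc k \<le> length z'" using assms(2) by (cases W) auto
  then obtain z where z: "z' = z @ [last z']" "k \<le> length z"
    by (cases z' rule: rev_cases) auto
  then have "W @ [b] = blocks k z @ [drop (Suc (length z) - k) z']"
    using blocks_snoc[OF assms(1) z(2), of "last z'"] assms(3) by simp
  then show ?thesis using that z by auto
qed

lemma blocks_snoc_overlap:
  assumes "k \<ge> 1" "W \<noteq> []" "W @ [b] = blocks k z"
  shows "b \<noteq> [] \<and> butlast b = tl (last W)"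
proof -
  have i: "Suc (length W - 1) = length W" "Suc (length W - 1) < length (blocks k z)"
    using assms(2) arg_cong[OF assms(3), of length] by auto
  have "blocks k z ! Suc (length W - 1) = b" "blocks k z ! (length W - 1) = last W"
    using i(1) assms(2) by (simp_all add: assms(3)[symmetric] nth_append last_conv_nth)
  then show ?thesis using nth_blocks_Suc(1,2)[OF assms(1) i(2)] by simp
qed

lemma blocks_snoc_last:
  assumes "k \<ge> 1" "k \<le> length z" "b \<noteq> []" "butlast b = tl (last (blocks k z))"
  shows "blocks k (z @ [last b]) = blocks k z @ [b]"
proof -
  have "drop (Suc (length z) - k) (z @ [last b]) = tl (last (blocks k z)) @ [last b]"
    using assms(1,2) by (simp add: last_blocks Suc_diff_le drop_Suc tl_drop)
  also have "\<dots> = b" using assms(3,4) by (metis append_butlast_last_id)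
  finally show ?thesis using blocks_snoc[OF assms(1,2), of "last b"] by simp
qed

lemma length_window [simp]: "length (window x s l) = l"
  by (simp add: window_def)

lemma nth_window: "t < l \<Longrightarrow> window x s l ! t = x (s + int t)"
  by (simp add: window_def)

lemma vimage_higher_block_cyl:
  "higher_block k -` cyl W = {x. \<forall>i<length W. window x (int i + (1 - int k)) k = W ! i}"
  by (auto simp: cyl_def higher_block_def algebra_simps)

lemma vimage_higher_block_cyl_blocks:
  assumes "k \<ge> 1" "k \<le> length z"
  shows "higher_block k -` cyl (blocks k z) = cyl_at (1 - int k) z"
proof -
  have "(\<forall>i<length (blocks k z). window x (int i + c) k = blocks k z ! i) \<longleftrightarrow> x \<in> cyl_at c z"
    for x c
  proof
    assume H: "\<forall>i<length (blocks k z). window x (int i + c) k = blocks k z ! i"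
    have "x (int i + c) = z ! i" if i: "i < length z" for i
    proof -
      define b where "b = min i (length z - k)"
      have "b < length (blocks k z)" "i - b < k" using assms i by (auto simp: b_def)
      then have "window x (int b + c) k ! (i - b) = blocks k z ! b ! (i - b)" using H by simp
      then show ?thesis
        using \<open>i - b < k\<close> \<open>b < length (blocks k z)\<close> assms i
        by (simp add: nth_window nth_blocks b_def of_nat_diff algebra_simps)
    qed
    then show "x \<in> cyl_at c z" by (simp add: cyl_at_def)
  next
    assume "x \<in> cyl_at c z"
    then have H: "\<forall>i<length z. x (int i + c) = z ! i" by (simp add: cyl_at_def)
    show "\<forall>i<length (blocks k z). window x (int i + c) k = blocks k z ! i"
    proof (intro allI impI nth_equalityI)
      fix i t assume i: "i < length (blocks k z)" and t: "t < length (window x (int i + c) k)"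
      then have "window x (int i + c) k ! t = x (int (i + t) + c)"
        by (simp add: nth_window ac_simps)
      also have "\<dots> = blocks k z ! i ! t"
        using H[rule_format, of "i + t"] i t assms by (simp add: nth_blocks)
      finally show "window x (int i + c) k ! t = blocks k z ! i ! t" .
    qed (use assms in \<open>simp add: nth_blocks\<close>)
  qed
  then show ?thesis by (auto simp: vimage_higher_block_cyl)
qed

lemma blocks_if_in_vimage_higher_block_cyl:
  assumes "W \<noteq> []" "x \<in> higher_block k -` cyl W"
  shows "\<exists>z. k \<le> length z \<and> W = blocks k z"
proof (intro exI conjI)
  let ?z = "map (\<lambda>t. x (int t + (1 - int k))) [0..<length W + k - 1]"
  show "k \<le> length ?z" using assms(1) by (cases W) auto
  have W: "\<forall>i<length W. window x (int i + (1 - int k)) k = W ! i"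
    using assms(2) by (simp add: vimage_higher_block_cyl)
  show "W = blocks k ?z"
  proof (rule nth_equalityI)
    fix i assume "i < length W"
    then have "W ! i = window x (int i + (1 - int k)) k" using W by simp
    then show "W ! i = blocks k ?z ! i"
      using \<open>i < length W\<close> by (auto simp: nth_blocks window_def ac_simps intro!: nth_equalityI)
  qed (use assms(1) in \<open>cases W; auto\<close>)
qed

lemma measurable_higher_block:
  "(higher_block k :: (int \<Rightarrow> 'a::finite) \<Rightarrow> _) \<in> seqM \<rightarrow>\<^sub>M seqM"
proof -
  have "{x. window x s k = l} \<in> sets seqM" for s and l :: "'a list"
  proof (cases "length l = k")
    case True
    then have "{x. window x s k = l} = {x. \<forall>t\<in>{..<k}. x (s + int t) = l ! t}"
      by (auto simp: list_eq_iff_nth_eq window_def)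
    then show ?thesis by (simp add: sets_seqM_coordinates)
  next
    case False
    then have "{x. window x s k = l} = {}" by auto
    then show ?thesis by simp
  qed
  then have "(\<lambda>x::int \<Rightarrow> 'a. window x s k) \<in> seqM \<rightarrow>\<^sub>M count_space UNIV" for s
    by (subst measurable_count_space_eq2_countable) (auto simp: vimage_def)
  then show ?thesis
    unfolding higher_block_def
    by (subst (2) seqM_def, intro measurable_PiM_single') (auto simp: space_PiM)
qed

context shift_invariant_prob
begin

abbreviation block_measure :: "nat \<Rightarrow> (int \<Rightarrow> 'a list) measure" where
  "block_measure k \<equiv> distr \<nu> seqM (higher_block k)"

lemma higher_block_measurable: "higher_block k \<in> \<nu> \<rightarrow>\<^sub>M seqM"
  using measurable_higher_block measurable_cong_sets[OF sets_eq refl] by blast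

lemma hat_block_measure: "hat (block_measure k) W = measure \<nu> (higher_block k -` cyl W)"
  by (simp add: hat_def measure_distr[OF higher_block_measurable] sets_cyl)

lemma hat_block_measure_blocks:
  "k \<ge> 1 \<Longrightarrow> k \<le> length z \<Longrightarrow> hat (block_measure k) (blocks k z) = p z"
  by (simp add: hat_block_measure vimage_higher_block_cyl_blocks measure_cyl_at)

lemma hat_block_measure_eq_0:
  assumes "W \<noteq> []" "\<nexists>z. k \<le> length z \<and> W = blocks k z"
  shows "hat (block_measure k) W = 0"
proof -
  have "higher_block k -` cyl W = {}"
    using blocks_if_in_vimage_higher_block_cyl[OF assms(1)] assms(2) by blast
  then show ?thesis by (simp add: hat_block_measure)
qed

end

section \<open>The Markov identity\<close>

lemma prod_pairs_snoc:
  assumes "W \<noteq> []"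
  shows "(\<Prod>i<length (W @ [b]) - 1. P ((W @ [b]) ! i) ((W @ [b]) ! Suc i))
       = (\<Prod>i<length W - 1. P (W ! i) (W ! Suc i)) * P (last W) b"
proof -
  obtain n where n: "length W = Suc n" using assms by (cases W) auto
  have "(\<Prod>i<n. P ((W @ [b]) ! i) ((W @ [b]) ! Suc i)) = (\<Prod>i<n. P (W ! i) (W ! Suc i))"
    using n by (intro prod.cong) (auto simp: nth_append)
  moreover have "last W = W ! n" using n assms by (simp add: last_conv_nth)
  ultimately show ?thesis using n by (simp add: nth_append)
qed

lemma hat_markov_snoc:
  assumes "is_markov_measure C P v \<mu>" "W \<noteq> []"
  shows "hat \<mu> (W @ [b]) * hat \<mu> [last W] = hat \<mu> W * hat \<mu> [last W, b]"
proof -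
  have hat: "hat \<mu> w = (if set w \<subseteq> C then v (hd w) * (\<Prod>i<length w - 1. P (w ! i) (w ! Suc i)) else 0)"
    if "w \<noteq> []" for w
    using assms(1) that by (simp add: is_markov_measure_def)
  consider "set W \<subseteq> C" "b \<in> C" | "set W \<subseteq> C" "b \<notin> C" | "\<not> set W \<subseteq> C" by blast
  then show ?thesis
  proof cases
    case 1
    then show ?thesis
      using hat[of "W @ [b]"] hat[of W] hat[of "[last W]"] hat[of "[last W, b]"]
        prod_pairs_snoc[OF assms(2), of P b] assms(2)
      by simp
  next
    case 2
    then show ?thesis using hat[of "W @ [b]"] hat[of "[last W, b]"] by simp
  next
    case 3
    then show ?thesis using hat[of "W @ [b]"] hat[of W] assms(2) by auto
  qed
qed

text \<open>The next symbol depends on the past only through the last \<open>k\<close> symbols; denominators are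
  cleared so that the identity is meaningful also for null words.\<close>

definition markov_identity :: "('a list \<Rightarrow> real) \<Rightarrow> nat \<Rightarrow> bool" where
  "markov_identity p k \<longleftrightarrow>
     (\<forall>u w a. length w = k \<longrightarrow> p (u @ w @ [a]) * p w = p (u @ w) * p (w @ [a]))"

context shift_invariant_prob
begin

lemma markov_identity_if_markov:
  assumes M: "is_markov_measure C P v (block_measure k)" and k: "k \<ge> 1"
  shows "markov_identity p k"
  unfolding markov_identity_def
proof (intro allI impI)
  fix u w :: "'a list" and a assume w: "length w = k"
  let ?H = "hat (block_measure k)" and ?b = "drop 1 (w @ [a])"
  have uw: "k \<le> length (u @ w)" using w by simp
  have blocks_uwa: "blocks k (u @ w @ [a]) = blocks k (u @ w) @ [?b]"
    using blocks_snoc[OF k uw, of a] w k by (simp add: Suc_diff_le)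
  have ne: "blocks k (u @ w) \<noteq> []" using uw k by (simp add: blocks_def)
  have last_blocks_uw: "last (blocks k (u @ w)) = w"
    using last_blocks[OF uw] w by simp
  have blocks_wa: "blocks k (w @ [a]) = [w, ?b]"
    using blocks_snoc[OF k, of w a] w k blocks_self[OF w] by (simp add: Suc_diff_le)
  have "?H (blocks k (u @ w) @ [?b]) * ?H [last (blocks k (u @ w))]
      = ?H (blocks k (u @ w)) * ?H [last (blocks k (u @ w)), ?b]"
    by (rule hat_markov_snoc[OF M ne])
  then have "?H (blocks k (u @ w @ [a])) * ?H (blocks k w)
      = ?H (blocks k (u @ w)) * ?H (blocks k (w @ [a]))"
    by (simp only: blocks_uwa last_blocks_uw blocks_wa blocks_self[OF w])
  then show "p (u @ w @ [a]) * p w = p (u @ w) * p (w @ [a])"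
    using w by (simp add: hat_block_measure_blocks[OF k])
qed

lemma markov_identity_append:
  assumes M: "markov_identity p k" and w: "length w = k"
  shows "p (u @ w @ s) * p w = p (u @ w) * p (w @ s)"
proof (induction s rule: rev_induct)
  case (snoc a s)
  define y where "y = take (length (w @ s) - k) (w @ s)"
  define w' where "w' = drop (length (w @ s) - k) (w @ s)"
  have yw': "y @ w' = w @ s" unfolding y_def w'_def by (rule append_take_drop_id)
  have w': "length w' = k" using w by (simp add: w'_def)
  have M1: "p (u @ w @ s @ [a]) * p w' = p (u @ w @ s) * p (w' @ [a])"
    using M w' yw' unfolding markov_identity_def by (metis append.assoc)
  have M2: "p (w @ s @ [a]) * p w' = p (w @ s) * p (w' @ [a])"
    using M w' yw' unfolding markov_identity_def by (metis append.assoc append_Nil)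
  show ?case
  proof (cases "p w' = 0")
    case True
    have "u @ w @ s @ [a] = (u @ y) @ w' @ [a]" "w @ s @ [a] = y @ w' @ [a]"
      using yw' by (metis append.assoc)+
    then have "p (u @ w @ s @ [a]) = 0" "p (w @ s @ [a]) = 0"
      by (metis hat_infix_eq_0[OF True])+
    then show ?thesis by simp
  next
    case False
    have "p (u @ w @ s @ [a]) * p w * p w' = p (u @ w @ s) * p w * p (w' @ [a])"
      using M1 by (simp add: algebra_simps)
    also have "\<dots> = p (u @ w) * p (w @ s @ [a]) * p w'"
      using snoc M2 by (simp add: algebra_simps)
    finally show ?thesis using False by simp
  qed
qed simp

lemma markov_identity_exchange:
  assumes "markov_identity p k" "length w = k"
  shows "p (u1 @ w @ s1) * p (u2 @ w @ s2) = p (u1 @ w @ s2) * p (u2 @ w @ s1)"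
proof (cases "p w = 0")
  case True
  then show ?thesis by (simp add: hat_infix_eq_0)
next
  case False
  then have "p (u @ w @ s) = p (u @ w) * p (w @ s) / p w" for u s
    using markov_identity_append[OF assms, of u s] by (simp add: field_simps)
  then show ?thesis by simp
qed

end

section \<open>Linear representations\<close>

lemma lin_rep_letter_matrices:
  fixes M :: "'a \<Rightarrow> real mat"
  assumes M: "\<And>a. M a \<in> carrier_mat n n" and "lam \<in> carrier_vec n" "gam \<in> carrier_vec n"
    and "\<And>w. p w = lam \<bullet> (foldr (\<lambda>a A. M a * A) w (1\<^sub>m n) *\<^sub>v gam)"
  shows "lin_rep p n lam (\<lambda>w. foldr (\<lambda>a A. M a * A) w (1\<^sub>m n)) gam"
proof -
  let ?Phi = "\<lambda>w. foldr (\<lambda>a A. M a * A) w (1\<^sub>m n)"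
  have carrier: "?Phi w \<in> carrier_mat n n" for w
    by (induction w) (auto intro: mult_carrier_mat[OF M])
  have "?Phi (u @ w) = ?Phi u * ?Phi w" for u w
    by (induction u) (simp_all add: carrier M assoc_mult_mat[of _ n n _ n _ n] left_mult_one_mat[OF carrier])
  then show ?thesis using assms carrier by (simp add: lin_rep_def)
qed

lemma lin_rep_min_rep_dim:
  assumes "lin_rep p n lam Phi gam"
  obtains lam' Phi' gam' where "lin_rep p (min_rep_dim p) lam' Phi' gam'"
  using LeastI_ex[of "\<lambda>n. \<exists>lam Phi gam. lin_rep p n lam Phi gam"] assms that
  by (auto simp: min_rep_dim_def)

text \<open>For an enumeration \<open>ws\<close> of the words of length \<open>k\<close>: the letter matrices of the
  \<open>k\<close>-step chain and the vectors of conditional probabilities \<open>p (w @ x) / p w\<close>, which form a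
  linear representation under the Markov identity of order \<open>k\<close>.\<close>

definition word_chain_matrix :: "('a list \<Rightarrow> real) \<Rightarrow> 'a list list \<Rightarrow> 'a \<Rightarrow> real mat" where
  "word_chain_matrix p ws a = mat (length ws) (length ws) (\<lambda>(i, j).
     if ws ! j = tl (ws ! i) @ [a] then p (ws ! i @ [a]) / p (ws ! i) else 0)"

definition cond_prob_vec :: "('a list \<Rightarrow> real) \<Rightarrow> 'a list list \<Rightarrow> 'a list \<Rightarrow> real vec" where
  "cond_prob_vec p ws x = vec (length ws) (\<lambda>i. p (ws ! i @ x) / p (ws ! i))"

context shift_invariant_prob
begin

lemma markov_identity_transition:
  assumes M: "markov_identity p k" and "k \<ge> 1" "length w = k"
  shows "p (w @ [a]) / p w * (p (tl w @ a # x) / p (tl w @ [a])) = p (w @ a # x) / p w"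
proof -
  let ?t = "tl w @ [a]"
  have hd_t: "[hd w] @ ?t = w @ [a]" using assms(2,3) by (cases w) auto
  have "length ?t = k" using assms(2,3) by simp
  from markov_identity_append[OF M this, of "[hd w]" x]
  have "p ([hd w] @ ?t @ x) * p ?t = p ([hd w] @ ?t) * p (?t @ x)" .
  then have E: "p (w @ a # x) * p ?t = p (w @ [a]) * p (tl w @ a # x)"
    by (metis hd_t append.assoc append_Cons append_Nil)
  show ?thesis
  proof (cases "p ?t = 0")
    case True
    then show ?thesis
      using hat_infix_eq_0[OF True, of "[hd w]" "[]"] hat_infix_eq_0[OF True, of "[hd w]" x] assms(2,3)
      by (cases w) auto
  next
    case False
    have "p (w @ [a]) / p w * (p (tl w @ a # x) / p ?t) = (p (w @ a # x) * p ?t) / (p w * p ?t)"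
      using E by simp
    then show ?thesis using False by simp
  qed
qed

lemma word_chain_matrix_mult:
  assumes M: "markov_identity p k" and k: "k \<ge> 1"
    and ws: "distinct ws" "set ws = {w. length w = k}"
  shows "word_chain_matrix p ws a *\<^sub>v cond_prob_vec p ws x = cond_prob_vec p ws (a # x)"
proof (rule eq_vecI)
  let ?d = "length ws"
  fix i assume "i < dim_vec (cond_prob_vec p ws (a # x))"
  then have i: "i < ?d" by (simp add: cond_prob_vec_def)
  then have length_i: "length (ws ! i) = k" using ws(2) nth_mem by blast
  then have "tl (ws ! i) @ [a] \<in> set ws" using ws(2) k by simp
  then obtain j where j: "j < ?d" "ws ! j = tl (ws ! i) @ [a]" by (auto simp: in_set_conv_nth)
  have index_j: "ws ! j' = tl (ws ! i) @ [a] \<longleftrightarrow> j' = j" if "j' < ?d" for j'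
    using j ws(1) that nth_eq_iff_index_eq by metis
  have "(word_chain_matrix p ws a *\<^sub>v cond_prob_vec p ws x) $ i = (\<Sum>j'\<in>{0..<?d}.
      (if ws ! j' = tl (ws ! i) @ [a] then p (ws ! i @ [a]) / p (ws ! i) else 0)
        * cond_prob_vec p ws x $ j')"
    using i by (simp add: word_chain_matrix_def cond_prob_vec_def scalar_prod_def)
  also have "\<dots> = (\<Sum>j'\<in>{0..<?d}.
      if j' = j then p (ws ! i @ [a]) / p (ws ! i) * cond_prob_vec p ws x $ j else 0)"
    by (intro sum.cong) (auto simp: index_j)
  also have "\<dots> = p (ws ! i @ [a]) / p (ws ! i) * (p (tl (ws ! i) @ a # x) / p (tl (ws ! i) @ [a]))"
    using j by (simp add: cond_prob_vec_def)
  also have "\<dots> = cond_prob_vec p ws (a # x) $ i"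
    using markov_identity_transition[OF M k length_i] i by (simp add: cond_prob_vec_def)
  finally show "(word_chain_matrix p ws a *\<^sub>v cond_prob_vec p ws x) $ i = cond_prob_vec p ws (a # x) $ i" .
qed (simp add: word_chain_matrix_def cond_prob_vec_def)

lemma lin_rep_if_markov_identity:
  assumes M: "markov_identity p k" and k: "k \<ge> 1"
  shows "\<exists>lam Phi gam. lin_rep p (card {w::'a list. length w = k}) lam Phi gam"
proof -
  obtain ws where ws: "distinct ws" "set ws = {w::'a list. length w = k}"
    using finite_distinct_list finite_lists_length_eq[of "UNIV :: 'a set" k] by force
  define d where "d = length ws"
  let ?M = "word_chain_matrix p ws" and ?g = "cond_prob_vec p ws"
  have M_carrier: "?M a \<in> carrier_mat d d" and g_carrier: "?g x \<in> carrier_vec d" for a x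
    by (simp_all add: word_chain_matrix_def cond_prob_vec_def d_def)
  have foldr_g: "foldr (\<lambda>a A. ?M a * A) x (1\<^sub>m d) *\<^sub>v ?g [] = ?g x" for x
  proof (induction x)
    case (Cons a x)
    have "foldr (\<lambda>a A. ?M a * A) x (1\<^sub>m d) \<in> carrier_mat d d"
      by (induction x) (auto simp: M_carrier intro!: mult_carrier_mat)
    from assoc_mult_mat_vec[OF M_carrier this g_carrier]
    have "foldr (\<lambda>a A. ?M a * A) (a # x) (1\<^sub>m d) *\<^sub>v ?g [] = ?M a *\<^sub>v ?g x"
      using Cons by simp
    then show ?case using word_chain_matrix_mult[OF M k ws] by simp
  qed (simp add: cond_prob_vec_def d_def)
  define lam where "lam = vec d (\<lambda>i. p (ws ! i))"
  have lam_carrier: "lam \<in> carrier_vec d" by (simp add: lam_def)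
  have "p x = lam \<bullet> ?g x" for x
  proof -
    have "p (ws ! i) * (p (ws ! i @ x) / p (ws ! i)) = p (ws ! i @ x)" for i
      using hat_prefix_le[of "ws ! i" x] hat_nonneg[of "ws ! i @ x"] by force
    then have "lam \<bullet> ?g x = (\<Sum>i<d. p (ws ! i @ x))"
      by (simp add: lam_def cond_prob_vec_def scalar_prod_def atLeast0LessThan d_def)
    also have "\<dots> = (\<Sum>w\<in>set ws. p (w @ x))"
      unfolding d_def by (rule sum.reindex_bij_betw[OF bij_betw_nth[OF ws(1) refl refl]])
    also have "\<dots> = p x"
      unfolding ws(2) by (rule hat_sum_prefixes)
    finally show ?thesis by simp
  qed
  then have "lin_rep p d lam (\<lambda>w. foldr (\<lambda>a A. ?M a * A) w (1\<^sub>m d)) (?g [])"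
    by (intro lin_rep_letter_matrices M_carrier lam_carrier g_carrier) (simp add: foldr_g)
  moreover have "card {w::'a list. length w = k} = d"
    using distinct_card[OF ws(1)] ws(2) by (simp add: d_def)
  ultimately show ?thesis by auto
qed

end

section \<open>Exchange defects\<close>

lemma (in vector_space) dim_less_if_span_psubset:
  assumes "span A \<subset> span B" "B \<subseteq> span E" "finite E"
  shows "dim A < dim B"
proof -
  obtain BA where BA: "BA \<subseteq> A" "independent BA" "A \<subseteq> span BA" "card BA = dim A"
    using basis_exists by blast
  obtain BB where BB: "BB \<subseteq> B" "independent BB" "B \<subseteq> span BB" "card BB = dim B"
    using basis_exists by blast
  have "finite BB" using independent_span_bound[OF assms(3) BB(2)] BB(1) assms(2) by blast
  obtain x where x: "x \<in> span B" "x \<notin> span A" using assms(1) by blast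
  have "span BA = span A" using BA(1,3) by (metis span_mono span_span subset_antisym)
  then have ind: "independent (insert x BA)" using x(2) BA(2) by (simp add: independent_insertI)
  have "span B \<subseteq> span BB" using BB(3) span_minimal subspace_span by blast
  moreover have "A \<subseteq> span B" using assms(1) span_superset by blast
  ultimately have "insert x BA \<subseteq> span BB" using x(1) BA(1) by blast
  then have "finite (insert x BA)" "card (insert x BA) \<le> card BB"
    using independent_span_bound[OF \<open>finite BB\<close> ind] by auto
  moreover have "x \<notin> BA" using x(2) BA(1) span_superset by blast
  ultimately show ?thesis using BA(4) BB(4) by simp
qed

definition fun_scale :: "real \<Rightarrow> ('x \<Rightarrow> real) \<Rightarrow> ('x \<Rightarrow> real)" where
  "fun_scale r f = (\<lambda>x. r * f x)"

interpretation fun_vs: vector_space fun_scale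
  by unfold_locales (auto simp: fun_scale_def fun_eq_iff algebra_simps)

definition exchange_defect ::
  "('a list \<Rightarrow> real) \<Rightarrow> 'a list \<Rightarrow> 'a list \<Rightarrow> 'a list \<Rightarrow> ('a list \<times> 'a list \<Rightarrow> real)" where
  "exchange_defect p w u1 u2 =
     (\<lambda>(s1, s2). p (u1 @ w @ s1) * p (u2 @ w @ s2) - p (u1 @ w @ s2) * p (u2 @ w @ s1))"

definition exchange_defects :: "('a list \<Rightarrow> real) \<Rightarrow> nat \<Rightarrow> ('a list \<times> 'a list \<Rightarrow> real) set" where
  "exchange_defects p j = {exchange_defect p w u1 u2 | w u1 u2. length w = j}"

definition prepend_args :: "'a \<Rightarrow> ('a list \<times> 'a list \<Rightarrow> real) \<Rightarrow> ('a list \<times> 'a list \<Rightarrow> real)" where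
  "prepend_args a f = (\<lambda>(s1, s2). f (a # s1, a # s2))"

lemma exchange_defects_Suc_subset: "exchange_defects p (Suc j) \<subseteq> exchange_defects p j"
proof
  fix f assume "f \<in> exchange_defects p (Suc j)"
  then obtain a w u1 u2 where "f = exchange_defect p (a # w) u1 u2" "length w = j"
    by (auto simp: exchange_defects_def length_Suc_conv)
  moreover have "exchange_defect p (a # w) u1 u2 = exchange_defect p w (u1 @ [a]) (u2 @ [a])"
    by (simp add: exchange_defect_def)
  ultimately show "f \<in> exchange_defects p j" by (auto simp: exchange_defects_def)
qed

lemma exchange_defects_antimono: "j \<le> m \<Longrightarrow> exchange_defects p m \<subseteq> exchange_defects p j"
  by (induction m rule: dec_induct) (use exchange_defects_Suc_subset in blast)+

lemma exchange_defects_Suc: "exchange_defects p (Suc j) = (\<Union>a. prepend_args a ` exchange_defects p j)"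
proof -
  have snoc: "exchange_defect p (w @ [a]) u1 u2 = prepend_args a (exchange_defect p w u1 u2)" for w a u1 u2
    by (simp add: exchange_defect_def prepend_args_def fun_eq_iff)
  show ?thesis
  proof (intro subset_antisym subsetI)
    fix f assume "f \<in> exchange_defects p (Suc j)"
    then obtain w a u1 u2 where "f = exchange_defect p (w @ [a]) u1 u2" "length w = j"
      by (auto simp: exchange_defects_def length_Suc_conv_rev)
    then have "f = prepend_args a (exchange_defect p w u1 u2)"
      "exchange_defect p w u1 u2 \<in> exchange_defects p j"
      by (auto simp: snoc exchange_defects_def)
    then show "f \<in> (\<Union>a. prepend_args a ` exchange_defects p j)" by blast
  next
    fix f assume "f \<in> (\<Union>a. prepend_args a ` exchange_defects p j)"
    then obtain w a u1 u2 where "f = prepend_args a (exchange_defect p w u1 u2)" "length w = j"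
      by (auto simp: exchange_defects_def)
    then have "f = exchange_defect p (w @ [a]) u1 u2" "length (w @ [a]) = Suc j"
      by (simp_all add: snoc)
    then show "f \<in> exchange_defects p (Suc j)"
      unfolding exchange_defects_def by blast
  qed
qed

lemma span_prepend_args_mono:
  assumes "X \<subseteq> fun_vs.span Y"
  shows "fun_vs.span (\<Union>a. prepend_args a ` X) \<subseteq> fun_vs.span (\<Union>a. prepend_args a ` Y)"
proof -
  let ?S = "fun_vs.span (\<Union>a. prepend_args a ` Y)"
  have "fun_vs.subspace {f. \<forall>a. prepend_args a f \<in> ?S}"
    unfolding fun_vs.subspace_def
  proof (intro conjI ballI allI; clarsimp)
    show "prepend_args a 0 \<in> ?S" for a
      using fun_vs.span_zero by (simp add: prepend_args_def zero_fun_def case_prod_unfold)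
    show "prepend_args a (f + g) \<in> ?S"
      if "\<forall>a. prepend_args a f \<in> ?S" "\<forall>a. prepend_args a g \<in> ?S" for a f g
    proof -
      have "prepend_args a (f + g) = prepend_args a f + prepend_args a g"
        by (simp add: prepend_args_def fun_eq_iff)
      then show ?thesis using that fun_vs.span_add by metis
    qed
    show "prepend_args a (fun_scale c f) \<in> ?S" if "\<forall>a. prepend_args a f \<in> ?S" for a c f
    proof -
      have "prepend_args a (fun_scale c f) = fun_scale c (prepend_args a f)"
        by (simp add: prepend_args_def fun_scale_def fun_eq_iff)
      then show ?thesis using that fun_vs.span_scale by metis
    qed
  qed
  moreover have "Y \<subseteq> {f. \<forall>a. prepend_args a f \<in> ?S}" by (auto intro: fun_vs.span_base)
  ultimately have "fun_vs.span Y \<subseteq> {f. \<forall>a. prepend_args a f \<in> ?S}"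
    by (rule fun_vs.span_minimal[rotated])
  then have "(\<Union>a. prepend_args a ` X) \<subseteq> ?S" using assms by blast
  then show ?thesis by (rule fun_vs.span_minimal[OF _ fun_vs.subspace_span])
qed

lemma span_exchange_defects_Suc_Suc:
  assumes "fun_vs.span (exchange_defects p (Suc j)) = fun_vs.span (exchange_defects p j)"
  shows "fun_vs.span (exchange_defects p (Suc (Suc j))) = fun_vs.span (exchange_defects p (Suc j))"
proof -
  have "exchange_defects p (Suc j) \<subseteq> fun_vs.span (exchange_defects p j)"
    "exchange_defects p j \<subseteq> fun_vs.span (exchange_defects p (Suc j))"
    using assms fun_vs.span_superset by blast+
  then show ?thesis
    unfolding exchange_defects_Suc[of p "Suc j"] exchange_defects_Suc[of p j]
    by (intro subset_antisym span_prepend_args_mono)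
qed

lemma span_exchange_defects_stable:
  assumes "fun_vs.span (exchange_defects p (Suc i)) = fun_vs.span (exchange_defects p i)"
  shows "fun_vs.span (exchange_defects p (i + m)) = fun_vs.span (exchange_defects p i)"
proof -
  have "fun_vs.span (exchange_defects p (Suc (i + m))) = fun_vs.span (exchange_defects p (i + m))" for m
    by (induction m) (simp_all add: assms span_exchange_defects_Suc_Suc)
  then show ?thesis by (induction m) auto
qed

lemma span_exchange_defects_Suc_eq:
  assumes B: "exchange_defects p 0 \<subseteq> fun_vs.span B" "finite B" "card B \<le> N"
  shows "\<exists>i\<le>N. fun_vs.span (exchange_defects p (Suc i)) = fun_vs.span (exchange_defects p i)"
proof (rule ccontr)
  let ?V = "\<lambda>j. fun_vs.span (exchange_defects p j)"
  assume "\<not> (\<exists>i\<le>N. ?V (Suc i) = ?V i)"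
  then have "?V (Suc i) \<subset> ?V i" if "i \<le> N" for i
    using that fun_vs.span_mono[OF exchange_defects_Suc_subset[of p i]] by blast
  moreover have "exchange_defects p i \<subseteq> fun_vs.span B" for i
    using exchange_defects_antimono[of 0 i p] B(1) by blast
  ultimately have less: "fun_vs.dim (exchange_defects p (Suc i)) < fun_vs.dim (exchange_defects p i)"
    if "i \<le> N" for i
    using that fun_vs.dim_less_if_span_psubset B(2) by blast
  have "fun_vs.dim (exchange_defects p i) + i \<le> N" if "i \<le> N" for i
    using that
  proof (induction i)
    case 0
    then show ?case using fun_vs.dim_le_card[OF B(1,2)] B(3) by simp
  next
    case (Suc i)
    then show ?case using less[of i] by simp
  qed
  from this[of N] less[of N] show False by simp
qed

lemma exchange_defects_vanish:
  assumes B: "exchange_defects p 0 \<subseteq> fun_vs.span B" "finite B" "card B \<le> N"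
    and vanish: "exchange_defects p k \<subseteq> {0}"
  shows "exchange_defects p N \<subseteq> {0}"
proof -
  obtain i where i: "i \<le> N" "fun_vs.span (exchange_defects p (Suc i)) = fun_vs.span (exchange_defects p i)"
    using span_exchange_defects_Suc_eq[OF B] by blast
  have "exchange_defects p (i + k) \<subseteq> {0}"
    using exchange_defects_antimono[of k "i + k" p] vanish by auto
  then have "fun_vs.span (exchange_defects p (i + k)) \<subseteq> {0}"
    using fun_vs.span_mono fun_vs.span_empty fun_vs.span_insert_0[of "{}"] by (metis subset_singleton_iff)
  then have "exchange_defects p i \<subseteq> {0}"
    using span_exchange_defects_stable[OF i(2), of k] fun_vs.span_superset by blast
  then show ?thesis using exchange_defects_antimono[OF i(1), of p] by blast
qed

lemma sum_fun_apply: "(\<Sum>i\<in>A. F i) x = (\<Sum>i\<in>A. F i x)"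
  by (induction A rule: infinite_finite_induct) auto

lemma lin_rep_append:
  assumes "lin_rep p n lam Phi gam"
  shows "p (u @ s) = (\<Sum>i\<in>{0..<n}. (\<Sum>j\<in>{0..<n}. lam $ j * Phi u $$ (j, i)) * (Phi s *\<^sub>v gam) $ i)"
proof -
  have carrier: "lam \<in> carrier_vec n" "gam \<in> carrier_vec n" "\<And>w. Phi w \<in> carrier_mat n n"
    and Phi_append: "\<And>u w. Phi (u @ w) = Phi u * Phi w"
    and rep: "\<And>w. p w = lam \<bullet> (Phi w *\<^sub>v gam)"
    using assms by (auto simp: lin_rep_def)
  define g where "g = Phi s *\<^sub>v gam"
  have "g \<in> carrier_vec n" unfolding g_def by (rule mult_mat_vec_carrier[OF carrier(3) carrier(2)])
  have "p (u @ s) = lam \<bullet> (Phi u *\<^sub>v g)"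
    unfolding rep Phi_append g_def using assoc_mult_mat_vec[OF carrier(3) carrier(3) carrier(2)] by simp
  also have "\<dots> = (\<Sum>j\<in>{0..<n}. lam $ j * (\<Sum>i\<in>{0..<n}. Phi u $$ (j, i) * g $ i))"
    using carrier(3)[of u] \<open>g \<in> carrier_vec n\<close> by (simp add: scalar_prod_def)
  also have "\<dots> = (\<Sum>j\<in>{0..<n}. \<Sum>i\<in>{0..<n}. lam $ j * Phi u $$ (j, i) * g $ i)"
    by (simp add: sum_distrib_left mult.assoc)
  also have "\<dots> = (\<Sum>i\<in>{0..<n}. (\<Sum>j\<in>{0..<n}. lam $ j * Phi u $$ (j, i)) * g $ i)"
    by (subst sum.swap) (simp add: sum_distrib_right)
  finally show ?thesis by (simp add: g_def)
qed

text \<open>A linear representation of dimension \<open>n\<close> factors \<open>p (u @ s)\<close> through \<open>n\<close> functions of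
  \<open>s\<close>, so the exchange defects of order 0 lie in the span of their \<open>n\<^sup>2\<close> pairwise products.\<close>

lemma exchange_defects_0_span:
  assumes "lin_rep p n lam Phi gam"
  obtains B where "exchange_defects p 0 \<subseteq> fun_vs.span B" "finite B" "card B \<le> n * n"
proof -
  define c where "c u i = (\<Sum>j\<in>{0..<n}. lam $ j * Phi u $$ (j, i))" for u i
  define e where "e s i = (Phi s *\<^sub>v gam) $ i" for s i
  define basis where "basis = (\<lambda>(i::nat, l::nat). (\<lambda>(s1, s2). e s1 i * e s2 l))"
  define I where "I = {0..<n} \<times> {0..<n}"
  have split: "p (u @ s) = (\<Sum>i\<in>{0..<n}. c u i * e s i)" for u s
    using lin_rep_append[OF assms] by (simp add: c_def e_def)
  have "f \<in> fun_vs.span (basis ` I)" if f_defect: "f \<in> exchange_defects p 0" for f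
  proof -
    obtain u1 u2 where f: "f = exchange_defect p [] u1 u2"
      using f_defect by (auto simp: exchange_defects_def)
    let ?coeff = "\<lambda>(i, l). c u1 i * c u2 l - c u1 l * c u2 i"
    have "f = (\<Sum>il\<in>I. fun_scale (?coeff il) (basis il))"
    proof (rule ext, clarify)
      fix s1 s2
      let ?a = "c u1" and ?b = "c u2" and ?x = "e s1" and ?y = "e s2"
      have "f (s1, s2) = (\<Sum>i\<in>{0..<n}. ?a i * ?x i) * (\<Sum>l\<in>{0..<n}. ?b l * ?y l)
          - (\<Sum>l\<in>{0..<n}. ?a l * ?y l) * (\<Sum>i\<in>{0..<n}. ?b i * ?x i)"
        by (simp add: f exchange_defect_def split)
      also have "\<dots> = (\<Sum>i\<in>{0..<n}. \<Sum>l\<in>{0..<n}. (?a i * ?b l - ?a l * ?b i) * (?x i * ?y l))"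
        unfolding sum_product by (subst (2) sum.swap) (simp add: sum_subtractf[symmetric] algebra_simps)
      also have "\<dots> = (\<Sum>il\<in>I. fun_scale (?coeff il) (basis il)) (s1, s2)"
        unfolding I_def sum.cartesian_product
        by (simp add: sum_fun_apply fun_scale_def basis_def case_prod_unfold)
      finally show "f (s1, s2) = (\<Sum>il\<in>I. fun_scale (?coeff il) (basis il)) (s1, s2)" .
    qed
    then show ?thesis
      by (simp add: fun_vs.span_sum fun_vs.span_scale fun_vs.span_base)
  qed
  moreover have "card (basis ` I) \<le> n * n"
    using card_image_le[of I basis] by (simp add: I_def)
  ultimately show ?thesis using that[of "basis ` I"] by (auto simp: I_def)
qed

lemma markov_identity_if_exchange_defects_vanish:
  assumes "exchange_defects p k \<subseteq> {0}"
  shows "markov_identity p k"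
  unfolding markov_identity_def
proof (intro allI impI)
  fix u w :: "'a list" and a assume "length w = k"
  then have "exchange_defect p w u [] \<in> exchange_defects p k"
    unfolding exchange_defects_def by blast
  then have "exchange_defect p w u [] ([a], []) = 0" using assms by auto
  then show "p (u @ w @ [a]) * p w = p (u @ w) * p (w @ [a])"
    by (simp add: exchange_defect_def)
qed

context shift_invariant_prob
begin

lemma exchange_defects_vanish_if_markov_identity:
  assumes "markov_identity p k"
  shows "exchange_defects p k \<subseteq> {0}"
proof
  fix f assume "f \<in> exchange_defects p k"
  then obtain w u1 u2 where f: "f = exchange_defect p w u1 u2" and w: "length w = k"
    unfolding exchange_defects_def by blast
  have "f (s1, s2) = 0" for s1 s2
    using markov_identity_exchange[OF assms w, of u1 s1 u2 s2] by (simp add: f exchange_defect_def)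
  then show "f \<in> {0}" by (auto simp: fun_eq_iff)
qed

lemma markov_identity_if_sq_min_rep_dim_le:
  assumes "markov_identity p k" "k \<ge> 1" "min_rep_dim p ^ 2 \<le> N"
  shows "markov_identity p N"
proof -
  obtain lam Phi gam where "lin_rep p (min_rep_dim p) lam Phi gam"
    using lin_rep_if_markov_identity[OF assms(1,2)] lin_rep_min_rep_dim by metis
  then obtain B where B: "exchange_defects p 0 \<subseteq> fun_vs.span B" "finite B"
    "card B \<le> min_rep_dim p * min_rep_dim p"
    by (rule exchange_defects_0_span)
  have "card B \<le> N" using B(3) assms(3) by (simp add: power2_eq_square)
  with B(1,2) have "exchange_defects p N \<subseteq> {0}"
    using exchange_defects_vanish exchange_defects_vanish_if_markov_identity[OF assms(1)] by blast
  then show ?thesis by (rule markov_identity_if_exchange_defects_vanish)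
qed

end

section \<open>Irreducibility\<close>

definition word_irreducible :: "('a list \<Rightarrow> real) \<Rightarrow> bool" where
  "word_irreducible p \<longleftrightarrow> (\<forall>x y. p x > 0 \<longrightarrow> p y > 0 \<longrightarrow> (\<exists>z. p (x @ z @ y) > 0))"

lemma markov_data_stationary_pos:
  assumes D: "markov_data C P v" and a: "a \<in> C"
  shows "v a > 0"
proof (rule ccontr)
  let ?R = "{(a, b). a \<in> C \<and> b \<in> C \<and> P a b > 0}"
  have fin: "finite C" and P_nonneg: "\<forall>a\<in>C. \<forall>b\<in>C. P a b \<ge> 0"
    and irr: "\<forall>a\<in>C. \<forall>b\<in>C. (a, b) \<in> ?R\<^sup>+" and v_nonneg: "\<forall>a\<in>C. v a \<ge> 0"
    and v_sum: "(\<Sum>a\<in>C. v a) = 1" and stationary: "\<forall>b\<in>C. (\<Sum>a\<in>C. v a * P a b) = v b"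
    using D by (auto simp: markov_data_def)
  assume "\<not> v a > 0"
  then have "v a = 0" using v_nonneg a by force
  have v_zero_pred: "v x = 0" if "(x, y) \<in> ?R" "v y = 0" for x y
  proof -
    have "v x * P x y \<le> (\<Sum>a\<in>C. v a * P a y)"
      using that fin v_nonneg P_nonneg by (intro member_le_sum) auto
    then have "v x * P x y \<le> 0" using that stationary by simp
    moreover have "v x * P x y \<ge> 0" using that v_nonneg P_nonneg by simp
    ultimately show ?thesis using that by simp
  qed
  have "v x = 0" if "(x, a) \<in> ?R\<^sup>+" for x
    using that by (induction rule: converse_trancl_induct) (use v_zero_pred \<open>v a = 0\<close> in blast)+
  then have "\<forall>x\<in>C. v x = 0" using irr a by blast
  then show False using v_sum by simp
qed

context shift_invariant_prob
begin

lemma hat_pos_of_mult_eq: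
  assumes "p A * p B = p C * p D" "p C > 0" "p D > 0"
  shows "p A > 0"
proof -
  have "p A \<noteq> 0" using assms by auto
  then show ?thesis using hat_nonneg[of A] by simp
qed

lemma markov_edge_extends:
  assumes M: "is_markov_measure C P v (block_measure k)" and k: "k \<ge> 1"
    and edge: "b \<in> C" "c \<in> C" "P b c > 0"
  obtains a where "length b = k" "p (b @ [a]) > 0" "b @ [a] = hd b # c"
proof -
  have "hat (block_measure k) [b, c] = v b * P b c"
    using M edge by (simp add: is_markov_measure_def)
  moreover have "v b > 0"
    using M edge(1) markov_data_stationary_pos by (auto simp: is_markov_measure_def)
  ultimately have pos: "hat (block_measure k) [b, c] > 0" using edge(3) by simp
  then obtain z where z: "k \<le> length z" "[b, c] = blocks k z"
    using hat_block_measure_eq_0[of "[b, c]" k] by force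
  have "2 = Suc (length z) - k" using arg_cong[OF z(2), of length] by simp
  with z(1) have len_z: "length z = Suc k" by arith
  have b: "b = take k z" using arg_cong[OF z(2), of "\<lambda>W. W ! 0"] nth_blocks[of 0 z k] len_z by simp
  have c: "c = drop 1 z" using arg_cong[OF z(2), of "\<lambda>W. W ! 1"] nth_blocks[of 1 z k] len_z k by simp
  have bz: "b @ [last z] = z"
    using b len_z by (metis append_butlast_last_id butlast_conv_take diff_Suc_1 list.size(3) nat.distinct(1))
  have "z = hd b # c" using b c len_z k by (cases z; cases k) auto
  moreover have "p z > 0" using pos z hat_block_measure_blocks[OF k] by simp
  ultimately show ?thesis using that[of "last z"] b bz len_z by simp
qed

lemma markov_path_extends:
  assumes M: "is_markov_measure C P v (block_measure k)" and k: "k \<ge> 1"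
    and path: "(c, c') \<in> {(a, b). a \<in> C \<and> b \<in> C \<and> P a b > 0}\<^sup>+"
    and pos: "p (u @ c) > 0"
  shows "\<exists>r r'. p (u @ c @ r) > 0 \<and> c @ r = r' @ c'"
  using path
proof (induction rule: trancl_induct)
  case (base y)
  then obtain a where a: "length c = k" "p (c @ [a]) > 0" "c @ [a] = hd c # y"
    using markov_edge_extends[OF M k] by blast
  have "p (u @ c @ [a]) * p c = p (u @ c) * p (c @ [a])"
    using markov_identity_if_markov[OF M k] a(1) by (simp add: markov_identity_def)
  then have "p (u @ c @ [a]) > 0" using hat_pos_of_mult_eq pos a(2) by blast
  then show ?case using a(3) by (intro exI[of _ "[a]"] exI[of _ "[hd c]"]) simp
next
  case (step y y')
  then obtain r r' where r: "p (u @ c @ r) > 0" "c @ r = r' @ y" by blast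
  obtain a where a: "length y = k" "p (y @ [a]) > 0" "y @ [a] = hd y # y'"
    using markov_edge_extends[OF M k] step(2) by blast
  have "p ((u @ r') @ y @ [a]) * p y = p ((u @ r') @ y) * p (y @ [a])"
    using markov_identity_if_markov[OF M k] a(1) unfolding markov_identity_def by blast
  then have "p (u @ c @ r @ [a]) * p y = p (u @ c @ r) * p (y @ [a])"
    using r(2) by (metis append.assoc)
  then have "p (u @ c @ r @ [a]) > 0" using hat_pos_of_mult_eq r(1) a(2) by blast
  moreover have "c @ r @ [a] = (r' @ [hd y]) @ y'"
    using r(2) a(3) by (metis append.assoc append_Cons append_Nil)
  ultimately show ?case by blast
qed

lemma word_irreducible_if_markov:
  assumes M: "is_markov_measure C P v (block_measure k)" and k: "k \<ge> 1"
  shows "word_irreducible p"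
  unfolding word_irreducible_def
proof (intro allI impI)
  fix x y assume x: "p x > 0" and y: "p y > 0"
  obtain t where t: "length t = k" "p (x @ t) > 0" using hat_pos_extend_right[OF x] by blast
  obtain t' where t': "length t' = k" "p (t' @ y) > 0" using hat_pos_extend_left[OF y] by blast
  have state: "w \<in> C" if "length w = k" "p w > 0" for w
  proof (rule ccontr)
    assume "w \<notin> C"
    then have "hat (block_measure k) [w] = 0" using M by (simp add: is_markov_measure_def)
    then show False using that hat_block_measure_blocks[OF k, of w] by (simp add: blocks_self)
  qed
  have "t \<in> C" using state[OF t(1)] hat_suffix_le[of x t] t(2) by simp
  moreover have "t' \<in> C" using state[OF t'(1)] hat_prefix_le[of t' y] t'(2) by simp
  ultimately have "(t, t') \<in> {(a, b). a \<in> C \<and> b \<in> C \<and> P a b > 0}\<^sup>+"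
    using M by (simp add: is_markov_measure_def markov_data_def)
  then obtain r r' where r: "p (x @ t @ r) > 0" "t @ r = r' @ t'"
    using markov_path_extends[OF M k _ t(2)] by blast
  have "p ((x @ r') @ t' @ y) * p t' = p ((x @ r') @ t') * p (t' @ y)"
    using markov_identity_append[OF markov_identity_if_markov[OF M k] t'(1)] .
  then have "p ((x @ r') @ t' @ y) * p t' = p (x @ t @ r) * p (t' @ y)" using r(2) by simp
  then have "p ((x @ r') @ t' @ y) > 0" using hat_pos_of_mult_eq r(1) t'(2) by blast
  then have "p (x @ (r' @ t') @ y) > 0" by simp
  then show "\<exists>z. p (x @ z @ y) > 0" by blast
qed

end

section \<open>The Markov chain on words of length \<open>K\<close>\<close>

lemma sum_reindex_inj_nonzero:
  fixes f :: "'c::finite \<Rightarrow> 'b" and g :: "'b \<Rightarrow> 'd::comm_monoid_add"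
  assumes "finite T" "inj f"
    and "\<And>b. b \<in> T \<Longrightarrow> g b \<noteq> 0 \<Longrightarrow> b \<in> range f"
    and "\<And>c. f c \<notin> T \<Longrightarrow> h c = 0"
    and "\<And>c. f c \<in> T \<Longrightarrow> g (f c) = h c"
  shows "(\<Sum>b\<in>T. g b) = (\<Sum>c\<in>UNIV. h c)"
proof -
  have "(\<Sum>b\<in>T. g b) = (\<Sum>b\<in>f ` (f -` T). g b)"
    using assms(1,3) by (intro sum.mono_neutral_right) auto
  also have "\<dots> = (\<Sum>c\<in>f -` T. g (f c))"
    using sum.reindex[OF inj_on_subset[OF assms(2) subset_UNIV, of "f -` T"], where g = g] by simp
  also have "\<dots> = (\<Sum>c\<in>f -` T. h c)"
    using assms(5) by (intro sum.cong) auto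
  also have "\<dots> = (\<Sum>c\<in>UNIV. h c)"
    using assms(4) by (intro sum.mono_neutral_left) auto
  finally show ?thesis .
qed

definition markov_states :: "('a list \<Rightarrow> real) \<Rightarrow> nat \<Rightarrow> 'a list set" where
  "markov_states p K = {w. length w = K \<and> p w > 0}"

definition markov_trans :: "('a list \<Rightarrow> real) \<Rightarrow> 'a list \<Rightarrow> 'a list \<Rightarrow> real" where
  "markov_trans p w w' = (if w' \<noteq> [] \<and> butlast w' = tl w then p (w @ [last w']) / p w else 0)"

context shift_invariant_prob
begin

lemma finite_markov_states: "finite (markov_states p K)"
  by (rule finite_subset[of _ "{w. length w = K}"])
    (auto simp: markov_states_def finite_lists_length_eq[of "UNIV :: 'a set", simplified])

lemma sum_markov_states: "(\<Sum>w\<in>markov_states p K. p w) = 1"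
proof -
  have "(\<Sum>w\<in>markov_states p K. p w) = (\<Sum>w | length w = K. p w)"
    using hat_nonneg by (intro sum.mono_neutral_left)
      (auto simp: markov_states_def less_le finite_lists_length_eq[of "UNIV :: 'a set", simplified])
  also have "\<dots> = 1" using hat_sum_prefixes[where n = K and w = "[]"] by (simp add: hat_Nil)
  finally show ?thesis .
qed

lemma sum_markov_trans:
  assumes K: "K \<ge> 1" and a: "a \<in> markov_states p K"
  shows "(\<Sum>b\<in>markov_states p K. markov_trans p a b) = 1"
proof -
  have len_a: "length a = K" and pos_a: "p a > 0" using a by (auto simp: markov_states_def)
  have "(\<Sum>b\<in>markov_states p K. markov_trans p a b) = (\<Sum>c\<in>UNIV. p (a @ [c]) / p a)"
  proof (rule sum_reindex_inj_nonzero[OF finite_markov_states, where f = "\<lambda>c. tl a @ [c]"])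
    fix b assume "markov_trans p a b \<noteq> 0"
    then have "b \<noteq> []" "butlast b = tl a" by (auto simp: markov_trans_def split: if_splits)
    then have "b = tl a @ [last b]" by (metis append_butlast_last_id)
    then show "b \<in> range (\<lambda>c. tl a @ [c])" by blast
  next
    fix c assume "tl a @ [c] \<notin> markov_states p K"
    then have "p (tl a @ [c]) = 0"
      using len_a K hat_nonneg[of "tl a @ [c]"] by (auto simp: markov_states_def)
    moreover have "a @ [c] = [hd a] @ (tl a @ [c]) @ []" using len_a K by (cases a) auto
    ultimately show "p (a @ [c]) / p a = 0" by (simp only: hat_infix_eq_0)
  qed (auto simp: inj_def markov_trans_def)
  also have "\<dots> = 1"
    using hat_eq_sum_snoc[of a] pos_a by (simp add: sum_divide_distrib[symmetric])
  finally show ?thesis .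
qed

lemma sum_hat_markov_trans:
  assumes K: "K \<ge> 1" and b: "b \<in> markov_states p K"
  shows "(\<Sum>a\<in>markov_states p K. p a * markov_trans p a b) = p b"
proof -
  have len_b: "length b = K" using b by (simp add: markov_states_def)
  then have snoc_b: "(c # butlast b) @ [last b] = c # b" for c using K by (cases b rule: rev_cases) auto
  have "(\<Sum>a\<in>markov_states p K. p a * markov_trans p a b) = (\<Sum>c\<in>UNIV. p (c # b))"
  proof (rule sum_reindex_inj_nonzero[OF finite_markov_states, where f = "\<lambda>c. c # butlast b"])
    fix a assume "a \<in> markov_states p K" "p a * markov_trans p a b \<noteq> 0"
    then have "a \<noteq> []" "tl a = butlast b"
      using K by (auto simp: markov_states_def markov_trans_def split: if_splits)
    then show "a \<in> range (\<lambda>c. c # butlast b)" by (metis list.collapse rangeI)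
  next
    fix c assume "c # butlast b \<notin> markov_states p K"
    then have "p (c # butlast b) = 0"
      using len_b K hat_nonneg[of "c # butlast b"] by (auto simp: markov_states_def)
    then show "p (c # b) = 0"
      using hat_infix_eq_0[of "c # butlast b" "[]" "[last b]"] snoc_b by simp
  next
    fix c assume "c # butlast b \<in> markov_states p K"
    then show "p (c # butlast b) * markov_trans p (c # butlast b) b = p (c # b)"
      using len_b K snoc_b by (auto simp: markov_states_def markov_trans_def)
  qed (auto simp: inj_def)
  also have "\<dots> = p b" using hat_eq_sum_Cons[of b] by simp
  finally show ?thesis .
qed

lemma markov_trans_blocks:
  assumes K: "K \<ge> 1" and pos: "p z > 0"
  shows "i < length (blocks K z) \<Longrightarrow> blocks K z ! i \<in> markov_states p K"
    and "Suc i < length (blocks K z) \<Longrightarrow> markov_trans p (blocks K z ! i) (blocks K z ! Suc i) > 0"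
proof -
  show state: "blocks K z ! i \<in> markov_states p K" if "i < length (blocks K z)" for i
    using nth_blocks_split[OF that] hat_infix_le[of "take i z" "blocks K z ! i" "drop (i + K) z"] pos
    by (simp add: markov_states_def)
  assume i: "Suc i < length (blocks K z)"
  note overlap = nth_blocks_Suc[OF K i]
  have "take i z @ take (Suc K) (drop i z) @ drop (Suc K) (drop i z) = z"
    by (simp only: append_take_drop_id)
  then have "p (blocks K z ! i @ [last (blocks K z ! Suc i)]) > 0"
    using hat_infix_le[of "take i z" "take (Suc K) (drop i z)" "drop (Suc K) (drop i z)"] pos overlap(3)
    by simp
  moreover have "p (blocks K z ! i) > 0" using state[of i] i by (simp add: markov_states_def)
  ultimately show "markov_trans p (blocks K z ! i) (blocks K z ! Suc i) > 0"
    using overlap(1,2) by (simp add: markov_trans_def)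
qed

lemma markov_trans_irreducible:
  assumes K: "K \<ge> 1" and irr: "word_irreducible p"
    and a: "a \<in> markov_states p K" and b: "b \<in> markov_states p K"
  shows "(a, b) \<in> {(a, b). a \<in> markov_states p K \<and> b \<in> markov_states p K \<and> markov_trans p a b > 0}\<^sup>+"
proof -
  let ?R = "{(a, b). a \<in> markov_states p K \<and> b \<in> markov_states p K \<and> markov_trans p a b > 0}"
  have len: "length a = K" "length b = K" and "p a > 0" "p b > 0"
    using a b by (auto simp: markov_states_def)
  then obtain y where pos: "p (a @ y @ b) > 0" using irr by (auto simp: word_irreducible_def)
  define Bs where "Bs = blocks K (a @ y @ b)"
  have path: "(Bs ! 0, Bs ! j) \<in> ?R\<^sup>+" if "1 \<le> j" "j < length Bs" for j
    using that
  proof (induction j)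
    case (Suc j)
    have "(Bs ! j, Bs ! Suc j) \<in> ?R"
      using markov_trans_blocks[OF K pos, of j] markov_trans_blocks(1)[OF K pos, of "Suc j"] Suc.prems
      by (simp add: Bs_def)
    then show ?case
      using Suc by (cases "j = 0") (auto intro: trancl_into_trancl)
  qed simp
  have "Bs ! 0 = a" using len by (simp add: Bs_def nth_blocks)
  moreover have "Bs ! (length Bs - 1) = b"
  proof -
    have "length Bs > 0" using len K by (simp add: Bs_def)
    then have "Bs ! (length Bs - 1) = last Bs" by (simp add: last_conv_nth)
    then show ?thesis using len last_blocks[of K "a @ y @ b"] by (simp add: Bs_def)
  qed
  ultimately show ?thesis using path[of "length Bs - 1"] len K by (simp add: Bs_def)
qed

lemma hat_block_measure_outside_states:
  assumes K: "K \<ge> 1" and W: "W \<noteq> []" "\<not> set W \<subseteq> markov_states p K"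
  shows "hat (block_measure K) W = 0"
proof (cases "\<exists>z. K \<le> length z \<and> W = blocks K z")
  case True
  then obtain z where z: "K \<le> length z" "W = blocks K z" by blast
  obtain i where i: "i < length W" "W ! i \<notin> markov_states p K"
    using W(2) by (metis in_set_conv_nth subsetI)
  have "p z = 0"
  proof (rule ccontr)
    assume "p z \<noteq> 0"
    then have "p z > 0" using hat_nonneg[of z] by simp
    then show False using markov_trans_blocks(1)[OF K _ , of z i] i z(2) by simp
  qed
  then show ?thesis using hat_block_measure_blocks[OF K z(1)] z(2) by simp
next
  case False
  then show ?thesis using hat_block_measure_eq_0[OF W(1)] by blast
qed

lemma hat_block_measure_snoc_blocks:
  assumes K: "K \<ge> 1" and M: "markov_identity p K" and z: "K \<le> length z"
    and last_z: "last (blocks K z) \<in> markov_states p K"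
    and overlap: "b \<noteq> []" "butlast b = tl (last (blocks K z))"
  shows "hat (block_measure K) (blocks K z @ [b])
    = hat (block_measure K) (blocks K z) * markov_trans p (last (blocks K z)) b"
proof -
  let ?w = "last (blocks K z)" and ?c = "last b"
  have hat_zb: "hat (block_measure K) (blocks K z @ [b]) = p (z @ [?c])"
    using hat_block_measure_blocks[OF K, of "z @ [?c]"] blocks_snoc_last[OF K z overlap] z by simp
  have trans: "markov_trans p ?w b = p (?w @ [?c]) / p ?w"
    using overlap by (simp add: markov_trans_def)
  have "z = take (length z - K) z @ ?w" using last_blocks[OF z] by simp
  moreover have "length ?w = K" using last_z by (simp add: markov_states_def)
  ultimately have "p (z @ [?c]) * p ?w = p z * p (?w @ [?c])"
    using M unfolding markov_identity_def by (metis append.assoc)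
  moreover have "p ?w > 0" using last_z by (simp add: markov_states_def)
  ultimately have "p (z @ [?c]) = p z * (p (?w @ [?c]) / p ?w)" by (simp add: field_simps)
  then show ?thesis by (simp add: hat_zb hat_block_measure_blocks[OF K z] trans)
qed

lemma hat_block_measure_snoc_state:
  assumes K: "K \<ge> 1" and M: "markov_identity p K"
    and W: "W \<noteq> []" and last_W: "last W \<in> markov_states p K"
  shows "hat (block_measure K) (W @ [b]) = hat (block_measure K) W * markov_trans p (last W) b"
proof (cases "b \<noteq> [] \<and> butlast b = tl (last W)")
  case overlap: True
  show ?thesis
  proof (cases "\<exists>z. K \<le> length z \<and> W = blocks K z")
    case True
    then show ?thesis using hat_block_measure_snoc_blocks[OF K M] last_W overlap by blast
  next
    case False
    have "\<nexists>z'. K \<le> length z' \<and> W @ [b] = blocks K z'"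
    proof
      assume "\<exists>z'. K \<le> length z' \<and> W @ [b] = blocks K z'"
      then obtain z' where "W @ [b] = blocks K z'" by blast
      then obtain z where "K \<le> length z" "W = blocks K z" by (rule blocks_snoc_cases[OF K W])
      with False show False by blast
    qed
    then show ?thesis
      using hat_block_measure_eq_0[OF W] hat_block_measure_eq_0[of "W @ [b]" K] False by simp
  qed
next
  case False
  then have "\<nexists>z'. K \<le> length z' \<and> W @ [b] = blocks K z'"
    using blocks_snoc_overlap[OF K W] by blast
  moreover have "markov_trans p (last W) b = 0" using False by (auto simp: markov_trans_def)
  ultimately show ?thesis using hat_block_measure_eq_0[of "W @ [b]" K] by simp
qed

lemma hat_block_measure_states:
  assumes K: "K \<ge> 1" and M: "markov_identity p K"
  shows "W \<noteq> [] \<Longrightarrow> set W \<subseteq> markov_states p K \<Longrightarrow>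
    hat (block_measure K) W = p (hd W) * (\<Prod>i<length W - 1. markov_trans p (W ! i) (W ! Suc i))"
proof (induction W rule: rev_induct)
  case (snoc b W)
  show ?case
  proof (cases "W = []")
    case True
    then have "length b = K" using snoc.prems by (simp add: markov_states_def)
    then show ?thesis using True hat_block_measure_blocks[OF K, of b] by (simp add: blocks_self)
  next
    case False
    then have "hat (block_measure K) W = p (hd W) * (\<Prod>i<length W - 1. markov_trans p (W ! i) (W ! Suc i))"
      using snoc by simp
    moreover have "last W \<in> markov_states p K" using snoc.prems False by auto
    ultimately show ?thesis
      using hat_block_measure_snoc_state[OF K M False] prod_pairs_snoc[OF False, of "markov_trans p" b] False
      by simp
  qed
qed simp

lemma k_step_markov_if_markov_identity:
  assumes K: "K \<ge> 1" and M: "markov_identity p K" and irr: "word_irreducible p"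
  shows "k_step_markov K \<nu>"
proof -
  have "markov_states p K \<noteq> {}" using sum_markov_states[of K] by auto
  then have "markov_data (markov_states p K) (markov_trans p) p"
    unfolding markov_data_def
    using finite_markov_states sum_markov_states hat_nonneg markov_trans_irreducible[OF K irr]
      sum_markov_trans[OF K] sum_hat_markov_trans[OF K]
    by (auto simp: markov_trans_def hat_nonneg)
  moreover have "prob_space (block_measure K)"
    by (rule prob_space.prob_space_distr[OF prob_space higher_block_measurable])
  ultimately have "is_markov_measure (markov_states p K) (markov_trans p) p (block_measure K)"
    using hat_block_measure_states[OF K M] hat_block_measure_outside_states[OF K]
    by (auto simp: is_markov_measure_def)
  then show ?thesis by (auto simp: k_step_markov_def markov1_def)
qed

end

theorem mainTheorem1:
  fixes \<nu> :: "(int \<Rightarrow> 'a::finite) measure"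
  assumes "prob_space \<nu>"
    and "shift_invariant \<nu>"
    and "sofic_measure \<nu>"
    and "\<not> k_step_markov (2 ^ (min_rep_dim (hat \<nu>) ^ 2 - 1)) \<nu>"
  shows "\<forall>k::nat. k \<ge> 1 \<longrightarrow> \<not> k_step_markov k \<nu>"
proof (intro allI impI notI)
  fix k :: nat assume k: "k \<ge> 1" and "k_step_markov k \<nu>"
  then obtain C P v where M: "is_markov_measure C P v (distr \<nu> seqM (higher_block k))"
    by (auto simp: k_step_markov_def markov1_def)
  \<comment> \<open>Soficity is only needed for the measurable space of \<open>\<nu>\<close>: a \<open>k\<close>-step Markov measure
    has a linear representation anyway.\<close>
  from assms(3) have "sets \<nu> = sets seqM" by (auto simp: sofic_measure_def sofic_on_def)
  with assms(1,2) interpret shift_invariant_prob \<nu> by (intro shift_invariant_prob.intro)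
  define K :: nat where "K = 2 ^ (min_rep_dim p ^ 2 - 1)"
  have "m \<le> 2 ^ (m - 1)" for m :: nat using less_exp[of "m - 1"] by (cases m) (auto simp: Suc_le_eq)
  then have "min_rep_dim p ^ 2 \<le> K" by (simp add: K_def)
  then have "markov_identity p K"
    by (rule markov_identity_if_sq_min_rep_dim_le[OF markov_identity_if_markov[OF M k] k])
  then have "k_step_markov K \<nu>"
    using k_step_markov_if_markov_identity[OF _ _ word_irreducible_if_markov[OF M k]] by (simp add: K_def)
  with assms(4) show False by (simp add: K_def)
qed

end
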